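(* Let $n\ge 2$, $N=\{1,\dots,n\}$, for each $i\in N$ let $A_i$ be a nonempty finite set, $A=\prod_{i\in N}A_i$, $u_i:A\to\mathbb{R}$, $u(a)=(u_i(a))_{i\in N}$, and fix $\lambda\in\mathbb{R}^n\setminus\{\mathbf 0\}$. Then: (1) For $\Delta=\delta^T$ sufficiently close to $1$, the solution of the problem $\max_{a^{[n]}\in A^n}W_\lambda(a^{[n]},\Delta)$ is to play, in each overlap $k=1,\dots,n$, some $a^k\in\arg\max_{a'\in A}\lambda\cdot u(a')$. Moreover, $F(\delta,T)\to V$ as $\delta^T\nearrow 1$. (2) For $\Delta=\delta^T$ sufficiently close to $0$, the solution of the problem $\max_{a^{[n]}\in A^n}W_\lambda(a^{[n]},\Delta)$ is to play, in each overlap $k=1,\dots,n$, some $a^k\in\arg\max_{a'\in A}\lambda_{k}u_{k}(a')$ (player $k$ being the youngest player in overlap $k$). Moreover, $F(\delta,T)\to\prod_{i\in N}\left[\min_{a\in A}u_i(a),\ \max_{a\in A}u_i(a)\right]$ as $\delta^T\searrow 0$.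
   Context: Here $\delta\in(0,1]$ and $T\in\mathbb{N}$. For $a^{[n]}=(a^1,\dots,a^n)\in A^n$ extend indices by $a^s=a^{s-n}$ for $s\ge n+1$, and for $\Delta\in(0,1]$ define $$v_i^\Delta(a^{[n]})=\frac{\sum_{k=1}^n\Delta^{k-1}u_i(a^{i+k-1})}{\sum_{k=1}^n\Delta^{k-1}},\qquad W_\lambda(a^{[n]},\Delta)=\sum_{i=1}^n\lambda_i v_i^\Delta(a^{[n]}).$$ "The solution is to play ..." means that every maximizer $(a^1,\dots,a^n)$ has the stated form. $V=\operatorname{co}\{u(a):a\in A\}$ ($\operatorname{co}$ = convex hull). For $a^{[nT]}=(a^1,\dots,a^{nT})\in A^{nT}$, extend indices by $a^s=a^{s-nT}$ for $s\ge nT+1$, set $U_i(a^{[nT]})=\frac{1}{\sum_{k=1}^{nT}\delta^{k-1}}\sum_{k=1}^{nT}\delta^{k-1}u_i(a^{(i-1)T+k})$, $U=(U_i)_{i\in N}$, and $F(\delta,T)=\operatorname{co}\left(\bigcup_{a^{[nT]}\in A^{nT}}\{U(a^{[nT]})\}\right)$. Convergence of sets is with respect to the Hausdorff distance. *)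

theory Defs
  imports "HOL-Analysis.Analysis"
begin

text \<open>A sequence of m profiles a^1..a^m is a function
  in PiE {1..m} (\<lambda>_. A); it is extended periodically: a^s = a^(s-m).\<close>

definition cyc :: "nat \<Rightarrow> nat \<Rightarrow> nat" where
  "cyc m s = (s - 1) mod m + 1"

definition profiles :: "nat \<Rightarrow> (nat \<Rightarrow> 'b set) \<Rightarrow> (nat \<Rightarrow> 'b) set" where
  "profiles n Aset = PiE {1..n} Aset"

definition seqs :: "nat \<Rightarrow> nat \<Rightarrow> (nat \<Rightarrow> 'b set) \<Rightarrow> (nat \<Rightarrow> (nat \<Rightarrow> 'b)) set" where
  "seqs n m Aset = PiE {1..m} (\<lambda>_. profiles n Aset)"

definition vval :: "nat \<Rightarrow> (nat \<Rightarrow> (nat \<Rightarrow> 'b) \<Rightarrow> real) \<Rightarrow> nat \<Rightarrow> (nat \<Rightarrow> (nat \<Rightarrow> 'b)) \<Rightarrow> real \<Rightarrow> real" where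
  "vval n u i a \<Delta> =
     (\<Sum>k=1..n. \<Delta> ^ (k - 1) * u i (a (cyc n (i + k - 1)))) / (\<Sum>k=1..n. \<Delta> ^ (k - 1))"

definition Wval :: "nat \<Rightarrow> (nat \<Rightarrow> (nat \<Rightarrow> 'b) \<Rightarrow> real) \<Rightarrow> (nat \<Rightarrow> real) \<Rightarrow> (nat \<Rightarrow> (nat \<Rightarrow> 'b)) \<Rightarrow> real \<Rightarrow> real" where
  "Wval n u lam a \<Delta> = (\<Sum>i=1..n. lam i * vval n u i a \<Delta>)"

definition Uval :: "nat \<Rightarrow> nat \<Rightarrow> real \<Rightarrow> (nat \<Rightarrow> (nat \<Rightarrow> 'b) \<Rightarrow> real) \<Rightarrow> nat \<Rightarrow> (nat \<Rightarrow> (nat \<Rightarrow> 'b)) \<Rightarrow> real" where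
  "Uval n T \<delta> u i a =
     (\<Sum>k=1..n*T. \<delta> ^ (k - 1) * u i (a (cyc (n*T) ((i - 1) * T + k)))) / (\<Sum>k=1..n*T. \<delta> ^ (k - 1))"

text \<open>Identification of a nat-indexed payoff vector (players 1..n) with a point of
  R^n = real^'n, via a fixed labelling pl : {1..n} -> 'n (a bijection).\<close>
definition vec_of :: "(nat \<Rightarrow> 'n) \<Rightarrow> nat \<Rightarrow> (nat \<Rightarrow> real) \<Rightarrow> real ^ 'n" where
  "vec_of pl n x = (\<chi> j. x (the_inv_into {1..n} pl j))"

definition Fset :: "(nat \<Rightarrow> 'n) \<Rightarrow> nat \<Rightarrow> (nat \<Rightarrow> 'b set) \<Rightarrow> (nat \<Rightarrow> (nat \<Rightarrow> 'b) \<Rightarrow> real)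
    \<Rightarrow> real \<Rightarrow> nat \<Rightarrow> (real ^ 'n) set" where
  "Fset pl n Aset u \<delta> T =
     convex hull ((\<lambda>a. vec_of pl n (\<lambda>i. Uval n T \<delta> u i a)) ` seqs n (n*T) Aset)"

definition Vset :: "(nat \<Rightarrow> 'n) \<Rightarrow> nat \<Rightarrow> (nat \<Rightarrow> 'b set) \<Rightarrow> (nat \<Rightarrow> (nat \<Rightarrow> 'b) \<Rightarrow> real) \<Rightarrow> (real ^ 'n) set" where
  "Vset pl n Aset u = convex hull ((\<lambda>a. vec_of pl n (\<lambda>i. u i a)) ` profiles n Aset)"

definition Boxset :: "(nat \<Rightarrow> 'n) \<Rightarrow> nat \<Rightarrow> (nat \<Rightarrow> 'b set) \<Rightarrow> (nat \<Rightarrow> (nat \<Rightarrow> 'b) \<Rightarrow> real) \<Rightarrow> (real ^ 'n) set" where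
  "Boxset pl n Aset u =
     cbox (vec_of pl n (\<lambda>i. Min (u i ` profiles n Aset))) (vec_of pl n (\<lambda>i. Max (u i ` profiles n Aset)))"

text \<open>"The solution of max W is to play, in each overlap k, a profile in S k":
  every maximizer a^[n] has a^k in S k for all k.\<close>
definition solution_is :: "nat \<Rightarrow> (nat \<Rightarrow> 'b set) \<Rightarrow> (nat \<Rightarrow> (nat \<Rightarrow> 'b) \<Rightarrow> real) \<Rightarrow> (nat \<Rightarrow> real)
    \<Rightarrow> real \<Rightarrow> (nat \<Rightarrow> (nat \<Rightarrow> 'b) set) \<Rightarrow> bool" where
  "solution_is n Aset u lam \<Delta> S \<longleftrightarrow>
     (\<forall>a\<in>seqs n n Aset. (\<forall>b\<in>seqs n n Aset. Wval n u lam b \<Delta> \<le> Wval n u lam a \<Delta>)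
        \<longrightarrow> (\<forall>k\<in>{1..n}. a k \<in> S k))"

definition hausdorff_dist :: "'a::metric_space set \<Rightarrow> 'a set \<Rightarrow> real" where
  "hausdorff_dist S T =
     (if S \<noteq> {} \<and> T \<noteq> {} \<and> bounded S \<and> bounded T
      then max (SUP x\<in>S. infdist x T) (SUP y\<in>T. infdist y S) else 0)"

definition argmax_on :: "'a set \<Rightarrow> ('a \<Rightarrow> real) \<Rightarrow> 'a set" where
  "argmax_on X f = {x\<in>X. \<forall>y\<in>X. f y \<le> f x}"

end

theory Submission
  imports Defs
begin

(*
  For a fixed sequence a, the objective W(a, Delta) is continuous in Delta, and there are only
  finitely many sequences; hence for Delta close to Delta0 every maximiser at Delta is already a
  maximiser at Delta0.  At Delta = 1 every player weighs all n overlaps equally, so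
  W(a, 1) = (1/n) sum_k lam . u(a^k); at Delta = 0 only the first overlap of each player counts,
  so W(a, 0) = sum_k lam_k u_k(a^k).  Both are separable across overlaps, so their maximisers
  maximise overlap by overlap.

  F(delta, T) always contains V (constant sequences) and lies in the box (each U_i is a weighted
  average of values of u_i).  When delta^T is close to 1, the weights delta^(k-1), k <= nT, are
  almost uniform, so U(a) is close to the plain average of u along a, which lies in V.  When
  delta^T is close to 0, player i's payoff is dominated by the i-th block of T periods; letting
  that block repeat a minimiser or maximiser of u_i realises every vertex of the box up to an
  error of order delta^T.
*)

lemma cyc_id: "1 \<le> s \<Longrightarrow> s \<le> m \<Longrightarrow> cyc m s = s"
  unfolding cyc_def by simp

lemma cyc_in_range: "0 < m \<Longrightarrow> cyc m s \<in> {1..m}"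
  unfolding cyc_def by (simp add: Suc_leI)

lemma cyc_add_period: "1 \<le> s \<Longrightarrow> cyc m (s + m) = cyc m s"
proof -
  assume "1 \<le> s"
  then have "s + m - 1 = (s - 1) + m" by simp
  then show ?thesis unfolding cyc_def by simp
qed

lemma sum_cyc_shift:
  fixes f :: "nat \<Rightarrow> 'a::cancel_comm_monoid_add"
  assumes "0 < m"
  shows "(\<Sum>k=1..m. f (cyc m (c + k))) = (\<Sum>s=1..m. f s)"
proof (induction c)
  case 0
  then show ?case by (intro sum.cong) (auto simp: cyc_id)
next
  case (Suc c)
  let ?g = "\<lambda>k. f (cyc m (c + k))"
  have "?g 1 + (\<Sum>k=1..m. f (cyc m (Suc c + k))) = ?g 1 + (\<Sum>k=Suc 1..Suc m. ?g k)"
    using sum.shift_bounds_cl_Suc_ivl[of ?g 1 m] by simp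
  also have "\<dots> = (\<Sum>k=1..Suc m. ?g k)"
    by (rule sum.atLeast_Suc_atMost[symmetric]) simp
  also have "\<dots> = ?g 1 + (\<Sum>k=1..m. ?g k)"
    using cyc_add_period[of "Suc c" m] by (simp add: add.commute)
  finally show ?case using Suc by simp
qed

lemma sum_powers_pos: "0 \<le> (x::real) \<Longrightarrow> 1 \<le> m \<Longrightarrow> 0 < (\<Sum>k=1..m. x ^ (k - 1))"
  by (simp add: sum.atLeast_Suc_atMost add_pos_nonneg sum_nonneg)

lemma sum_powers_tail_le:
  fixes x :: real
  assumes "0 \<le> x" "T \<le> m"
  shows "(\<Sum>k=T+1..m. x ^ (k - 1)) \<le> x ^ T * (\<Sum>k=1..m. x ^ (k - 1))"
proof -
  have "(\<Sum>k=T+1..m. x ^ (k - 1)) = (\<Sum>j=1..m - T. x ^ (j + T - 1))"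
    using sum.shift_bounds_cl_nat_ivl[of "\<lambda>k. x ^ (k - 1)" 1 T "m - T"] assms(2)
    by (simp add: add.commute)
  also have "\<dots> = x ^ T * (\<Sum>j=1..m - T. x ^ (j - 1))"
    unfolding sum_distrib_left
  proof (intro sum.cong refl)
    fix j assume "j \<in> {1..m - T}"
    then have "j + T - 1 = T + (j - 1)" by auto
    then show "x ^ (j + T - 1) = x ^ T * x ^ (j - 1)" by (simp add: power_add)
  qed
  also have "\<dots> \<le> x ^ T * (\<Sum>j=1..m. x ^ (j - 1))"
    using assms by (intro mult_left_mono sum_mono2) auto
  finally show ?thesis .
qed

lemma weighted_mean_bounds:
  fixes w x :: "'k \<Rightarrow> real"
  assumes "finite K" "\<And>k. k \<in> K \<Longrightarrow> 0 \<le> w k" "0 < sum w K"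
    and "\<And>k. k \<in> K \<Longrightarrow> lo \<le> x k \<and> x k \<le> hi"
  shows "lo \<le> (\<Sum>k\<in>K. w k * x k) / sum w K \<and> (\<Sum>k\<in>K. w k * x k) / sum w K \<le> hi"
proof
  have "lo * sum w K \<le> (\<Sum>k\<in>K. w k * x k)"
    unfolding sum_distrib_left using assms by (intro sum_mono) (metis mult.commute mult_left_mono)
  then show "lo \<le> (\<Sum>k\<in>K. w k * x k) / sum w K"
    using assms(3) by (simp add: pos_le_divide_eq)
  have "(\<Sum>k\<in>K. w k * x k) \<le> hi * sum w K"
    unfolding sum_distrib_left using assms by (intro sum_mono) (metis mult.commute mult_left_mono)
  then show "(\<Sum>k\<in>K. w k * x k) / sum w K \<le> hi"
    using assms(3) by (simp add: pos_divide_le_eq)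
qed

lemma weighted_mean_deviation:
  fixes w x :: "'k \<Rightarrow> real"
  assumes K: "finite K" and w: "\<And>k. k \<in> K \<Longrightarrow> 0 \<le> w k" and S: "0 < sum w K"
    and R: "\<And>k. k \<in> K \<Longrightarrow> \<bar>x k - c\<bar> \<le> R" and J: "\<And>k. k \<in> J \<Longrightarrow> x k = c"
  shows "\<bar>(\<Sum>k\<in>K. w k * x k) / sum w K - c\<bar> \<le> R * sum w (K - J) / sum w K"
proof -
  have "(\<Sum>k\<in>K. w k * x k) / sum w K - c = (\<Sum>k\<in>K. w k * (x k - c)) / sum w K"
    using S by (simp add: field_simps sum_subtractf sum_distrib_left)
  moreover have "\<bar>\<Sum>k\<in>K. w k * (x k - c)\<bar> \<le> R * sum w (K - J)"
  proof -
    have "\<bar>\<Sum>k\<in>K. w k * (x k - c)\<bar> \<le> (\<Sum>k\<in>K. w k * \<bar>x k - c\<bar>)"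
      using sum_abs[of "\<lambda>k. w k * (x k - c)" K] w by (simp add: abs_mult)
    also have "\<dots> = (\<Sum>k\<in>K - J. w k * \<bar>x k - c\<bar>)"
      using K J by (intro sum.mono_neutral_right) auto
    also have "\<dots> \<le> (\<Sum>k\<in>K - J. w k * R)"
      using w R by (intro sum_mono mult_left_mono) auto
    finally show ?thesis by (metis mult.commute sum_distrib_right)
  qed
  ultimately show ?thesis
    using S by (simp add: divide_right_mono)
qed

lemma weighted_mean_near_mean:
  fixes w x :: "'k \<Rightarrow> real"
  assumes K: "finite K" "K \<noteq> {}" and c: "0 < c"
    and w: "\<And>k. k \<in> K \<Longrightarrow> c \<le> w k \<and> w k \<le> 1" and R: "\<And>k. k \<in> K \<Longrightarrow> \<bar>x k - x0\<bar> \<le> R"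
  shows "\<bar>(\<Sum>k\<in>K. w k * x k) / sum w K - (\<Sum>k\<in>K. x k) / card K\<bar> \<le> R * (1 - c) / c"
proof -
  define m where "m = real (card K)"
  define S where "S = sum w K"
  have m: "0 < m" using K unfolding m_def by (simp add: card_gt_0_iff)
  have S: "m * c \<le> S" "S \<le> m"
    using sum_bounded_below[of K c w] sum_bounded_above[of K w 1] w unfolding S_def m_def by auto
  have S0: "0 < S" using S(1) m c by (meson less_le_trans mult_pos_pos)
  \<comment> \<open>the weights \<open>w k / S - 1 / m\<close> sum to zero, so \<open>x0\<close> may be subtracted from every \<open>x k\<close>\<close>
  have "(\<Sum>k\<in>K. w k / S - 1 / m) = 0"
    using S0 m by (simp add: sum_subtractf S_def m_def flip: sum_divide_distrib)
  moreover have "(\<Sum>k\<in>K. (w k / S - 1 / m) * (x k - x0))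
      = (\<Sum>k\<in>K. (w k * x k / S - x k / m) - x0 * (w k / S - 1 / m))"
    by (intro sum.cong) (auto simp: algebra_simps diff_divide_distrib)
  moreover have "\<dots> = (\<Sum>k\<in>K. w k * x k) / S - (\<Sum>k\<in>K. x k) / m - x0 * (\<Sum>k\<in>K. w k / S - 1 / m)"
    by (simp add: sum_subtractf sum_divide_distrib flip: sum_distrib_left)
  ultimately have "(\<Sum>k\<in>K. w k * x k) / S - (\<Sum>k\<in>K. x k) / m = (\<Sum>k\<in>K. (w k / S - 1 / m) * (x k - x0))"
    by simp
  also have "\<bar>\<dots>\<bar> \<le> (\<Sum>k\<in>K. (1 - c) / (m * c) * R)"
  proof (rule order_trans[OF sum_abs sum_mono])
    fix k assume k: "k \<in> K"
    have "c \<le> S / m" "S / m \<le> 1" using S m by (simp_all add: field_simps)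
    then have "\<bar>w k - S / m\<bar> \<le> 1 - c" using w[OF k] by (auto simp: abs_le_iff)
    moreover have "w k / S - 1 / m = (w k - S / m) / S" using S0 m by (simp add: field_simps)
    ultimately have "\<bar>w k / S - 1 / m\<bar> \<le> (1 - c) / S"
      using S0 by (simp add: divide_right_mono)
    also have "\<dots> \<le> (1 - c) / (m * c)"
      using w[OF k] S S0 c m by (intro divide_left_mono) auto
    finally show "\<bar>(w k / S - 1 / m) * (x k - x0)\<bar> \<le> (1 - c) / (m * c) * R"
      unfolding abs_mult using R[OF k] by (intro mult_mono) auto
  qed
  also have "\<dots> = R * (1 - c) / c"
    using m unfolding m_def by simp
  finally show ?thesis unfolding S_def m_def .
qed

lemma argmax_on_separable_sum:
  fixes \<phi> :: "'k \<Rightarrow> 'a \<Rightarrow> real"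
  assumes K: "finite K" and a: "a \<in> argmax_on (PiE K P) (\<lambda>a. \<Sum>k\<in>K. \<phi> k (a k))" and k: "k \<in> K"
  shows "a k \<in> argmax_on (P k) (\<phi> k)"
proof -
  have aP: "a \<in> PiE K P" using a unfolding argmax_on_def by blast
  have "\<phi> k p \<le> \<phi> k (a k)" if p: "p \<in> P k" for p
  proof -
    have "a(k := p) \<in> PiE K P" using aP p k by (auto simp: PiE_def extensional_def)
    then have "(\<Sum>j\<in>K. \<phi> j ((a(k := p)) j)) \<le> (\<Sum>j\<in>K. \<phi> j (a j))"
      using a unfolding argmax_on_def by blast
    moreover have "(\<Sum>j\<in>K. \<phi> j ((a(k := p)) j)) = \<phi> k p + (\<Sum>j\<in>K - {k}. \<phi> j (a j))"
      using K k by (simp add: sum.remove)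
    moreover have "(\<Sum>j\<in>K. \<phi> j (a j)) = \<phi> k (a k) + (\<Sum>j\<in>K - {k}. \<phi> j (a j))"
      using K k by (simp add: sum.remove)
    ultimately show ?thesis by simp
  qed
  then show ?thesis using aP k unfolding argmax_on_def by auto
qed

lemma argmax_on_divide_pos: "0 < c \<Longrightarrow> argmax_on X (\<lambda>x. f x / c) = argmax_on X f"
  unfolding argmax_on_def by (simp add: divide_le_cancel)

lemma eventually_argmax_on_subset:
  fixes f :: "'a \<Rightarrow> 'b \<Rightarrow> real"
  assumes X: "finite X" and f: "\<And>x. x \<in> X \<Longrightarrow> (f x \<longlongrightarrow> f x t0) F"
  shows "eventually (\<lambda>t. argmax_on X (\<lambda>x. f x t) \<subseteq> argmax_on X (\<lambda>x. f x t0)) F"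
proof -
  have "eventually (\<lambda>t. f x t < f y t) F" if "x \<in> X" "y \<in> X" "f x t0 < f y t0" for x y
    using order_tendstoD(1)[OF tendsto_diff[OF f f], of y x 0] that by simp
  then have "eventually (\<lambda>t. \<forall>x\<in>X. \<forall>y\<in>{y\<in>X. f x t0 < f y t0}. f x t < f y t) F"
    using X by (intro eventually_ball_finite ballI) auto
  then show ?thesis
    by eventually_elim (force simp: argmax_on_def not_le[symmetric])
qed

section \<open>Hausdorff distance and convex hulls\<close>

lemma hausdorff_dist_le:
  fixes S T :: "'a::metric_space set"
  assumes "S \<noteq> {}" "T \<noteq> {}" "bounded S" "bounded T"
    and ST: "\<And>x. x \<in> S \<Longrightarrow> \<exists>y\<in>T. dist x y \<le> r"
    and TS: "\<And>y. y \<in> T \<Longrightarrow> \<exists>x\<in>S. dist y x \<le> r"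
  shows "hausdorff_dist S T \<le> r"
proof -
  have "(SUP x\<in>S. infdist x T) \<le> r"
  proof (rule cSUP_least)
    show "infdist x T \<le> r" if "x \<in> S" for x
      using ST[OF that] infdist_le[of _ T x] by force
  qed (use assms in auto)
  moreover have "(SUP y\<in>T. infdist y S) \<le> r"
  proof (rule cSUP_least)
    show "infdist y S \<le> r" if "y \<in> T" for y
      using TS[OF that] infdist_le[of _ S y] by force
  qed (use assms in auto)
  ultimately show ?thesis using assms unfolding hausdorff_dist_def by simp
qed

lemma convex_hull_near_convex:
  fixes T :: "'a::real_normed_vector set"
  assumes T: "convex T" and r: "0 \<le> r" and G: "\<And>g. g \<in> G \<Longrightarrow> \<exists>t\<in>T. dist g t \<le> r"
    and x: "x \<in> convex hull G"
  shows "\<exists>t\<in>T. dist x t \<le> r"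
proof -
  let ?M = "\<Union>t\<in>T. \<Union>y\<in>cball 0 r. {t + y}"
  have "convex ?M" using T by (intro convex_sums) auto
  moreover have "G \<subseteq> ?M"
  proof
    fix g assume "g \<in> G"
    then obtain t where t: "t \<in> T" "dist g t \<le> r" using G by blast
    then have "g - t \<in> cball 0 r" by (simp add: dist_norm norm_minus_commute)
    with t(1) show "g \<in> ?M" by (intro UN_I) auto
  qed
  ultimately have "convex hull G \<subseteq> ?M" by (intro hull_minimal)
  then have "x \<in> ?M" using x by (rule subsetD)
  then obtain t y where "t \<in> T" "y \<in> cball 0 r" "x = t + y" by auto
  then show ?thesis by (intro bexI[of _ t]) (auto simp: dist_norm)
qed

lemma cbox_subset_convex_hull_vertices:
  fixes a b :: "'a::euclidean_space"
  shows "cbox a b \<subseteq> convex hull {x. \<forall>i\<in>Basis. x \<bullet> i = a \<bullet> i \<or> x \<bullet> i = b \<bullet> i}"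
proof (cases "cbox a b = {}")
  case False
  let ?f = "\<lambda>x. \<Sum>k\<in>Basis. ((b \<bullet> k - a \<bullet> k) * (x \<bullet> k)) *\<^sub>R k"
  let ?C = "{x::'a. \<forall>i\<in>Basis. x \<bullet> i = 0 \<or> x \<bullet> i = 1}"
  have "linear ?f" by (rule linear_compose_sum) (auto simp: algebra_simps linearI)
  then have "cbox a b = convex hull ((+) a ` ?f ` ?C)"
    by (simp add: cbox_image_unit_interval[OF False] unit_interval_convex_hull
        convex_hull_linear_image convex_hull_translation)
  also have "\<dots> \<subseteq> convex hull {x. \<forall>i\<in>Basis. x \<bullet> i = a \<bullet> i \<or> x \<bullet> i = b \<bullet> i}"
    by (intro hull_mono) (auto simp: inner_add_left inner_sum_left_Basis)
  finally show ?thesis .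
qed simp

lemma finite_profiles: "\<forall>i\<in>{1..n}. finite (Aset i) \<Longrightarrow> finite (profiles n Aset)"
  unfolding profiles_def by (intro finite_PiE) auto

lemma profiles_nonempty: "\<forall>i\<in>{1..n}. Aset i \<noteq> {} \<Longrightarrow> profiles n Aset \<noteq> {}"
  unfolding profiles_def by (simp add: PiE_eq_empty_iff)

lemma finite_seqs: "finite (profiles n Aset) \<Longrightarrow> finite (seqs n m Aset)"
  unfolding seqs_def by (intro finite_PiE) auto

lemma seqs_nonempty: "profiles n Aset \<noteq> {} \<Longrightarrow> seqs n m Aset \<noteq> {}"
  unfolding seqs_def by (simp add: PiE_eq_empty_iff)

lemma seqs_cyc_in_profiles: "a \<in> seqs n m Aset \<Longrightarrow> 0 < m \<Longrightarrow> a (cyc m s) \<in> profiles n Aset"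
  unfolding seqs_def using cyc_in_range by blast

lemma vec_of_nth_pl:
  assumes "bij_betw pl {1..n} UNIV" "i \<in> {1..n}"
  shows "vec_of pl n x $ pl i = x i"
  using assms unfolding vec_of_def bij_betw_def by (simp add: the_inv_into_f_f)

lemma vec_of_components:
  assumes "bij_betw pl {1..n} UNIV"
  shows "vec_of pl n (\<lambda>i. y $ pl i) = y"
proof -
  have "pl (the_inv_into {1..n} pl j) = j" for j
    using assms unfolding bij_betw_def by (intro f_the_inv_into_f) auto
  then show ?thesis unfolding vec_of_def by (simp add: vec_eq_iff)
qed

lemma dist_vec_of_le:
  assumes pl: "bij_betw pl {1..n} (UNIV :: 'n::finite set)"
  shows "dist (vec_of pl n x) (vec_of pl n y) \<le> (\<Sum>i=1..n. \<bar>x i - y i\<bar>)"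
proof -
  let ?d = "vec_of pl n x - vec_of pl n y"
  have "dist (vec_of pl n x) (vec_of pl n y) \<le> (\<Sum>j\<in>UNIV. \<bar>?d $ j\<bar>)"
    unfolding dist_norm by (rule norm_le_l1_cart)
  also have "\<dots> = (\<Sum>i=1..n. \<bar>?d $ pl i\<bar>)"
    by (rule sum.reindex_bij_betw[OF pl, symmetric])
  also have "\<dots> = (\<Sum>i=1..n. \<bar>x i - y i\<bar>)"
    using pl by (intro sum.cong) (simp_all add: vec_of_nth_pl)
  finally show ?thesis .
qed

definition payoff_range :: "nat \<Rightarrow> (nat \<Rightarrow> 'b set) \<Rightarrow> (nat \<Rightarrow> (nat \<Rightarrow> 'b) \<Rightarrow> real) \<Rightarrow> nat \<Rightarrow> real" where
  "payoff_range n Aset u i = Max (u i ` profiles n Aset) - Min (u i ` profiles n Aset)"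

lemma payoff_diff_le_range:
  assumes "finite (profiles n Aset)" "p \<in> profiles n Aset" "q \<in> profiles n Aset"
  shows "\<bar>u i p - u i q\<bar> \<le> payoff_range n Aset u i"
proof -
  have "Min (u i ` profiles n Aset) \<le> u i q" "u i p \<le> Max (u i ` profiles n Aset)"
    "Min (u i ` profiles n Aset) \<le> u i p" "u i q \<le> Max (u i ` profiles n Aset)"
    using assms by simp_all
  then show ?thesis unfolding payoff_range_def by linarith
qed

lemma payoff_range_nonneg:
  assumes "finite (profiles n Aset)" "profiles n Aset \<noteq> {}"
  shows "0 \<le> payoff_range n Aset u i"
proof -
  obtain q where "q \<in> profiles n Aset" using assms(2) by blast
  then show ?thesis using payoff_diff_le_range[OF assms(1), of q q u i] by simp
qed

section \<open>The maximisation problem for W\<close>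

lemma isCont_Wval: "0 \<le> \<Delta> \<Longrightarrow> 1 \<le> n \<Longrightarrow> isCont (\<lambda>\<Delta>. Wval n u lam a \<Delta>) \<Delta>"
  unfolding Wval_def vval_def
  by (intro continuous_intros) (use sum_powers_pos in fastforce)

lemma Wval_at_one:
  assumes "1 \<le> n"
  shows "Wval n u lam a 1 = (\<Sum>k=1..n. (\<Sum>i=1..n. lam i * u i (a k)) / n)"
proof -
  have "vval n u i a 1 = (\<Sum>s=1..n. u i (a s)) / n" if "i \<in> {1..n}" for i
    using that assms sum_cyc_shift[of n "\<lambda>s. u i (a s)" "i - 1"] by (simp add: vval_def)
  then show ?thesis
    unfolding Wval_def by (simp add: sum_divide_distrib sum_distrib_left mult.assoc) (rule sum.swap)
qed

lemma Wval_at_zero: "Wval n u lam a 0 = (\<Sum>k=1..n. lam k * u k (a k))"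
proof -
  have "vval n u i a 0 = u i (a i)" if "i \<in> {1..n}" for i
    using that by (simp add: vval_def sum.atLeast_Suc_atMost cyc_id power_0_left sum.neutral)
  then show ?thesis unfolding Wval_def by simp
qed

lemma solution_is_iff_argmax:
  "solution_is n Aset u lam \<Delta> S \<longleftrightarrow>
     (\<forall>a\<in>argmax_on (seqs n n Aset) (\<lambda>a. Wval n u lam a \<Delta>). \<forall>k\<in>{1..n}. a k \<in> S k)"
  unfolding solution_is_def argmax_on_def by auto

lemma eventually_solution_is:
  assumes "finite (seqs n n Aset)" "1 \<le> n" "0 \<le> \<Delta>\<^sub>0" "solution_is n Aset u lam \<Delta>\<^sub>0 S"
  shows "eventually (\<lambda>\<Delta>. solution_is n Aset u lam \<Delta> S) (nhds \<Delta>\<^sub>0)"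
proof -
  have "eventually (\<lambda>\<Delta>. argmax_on (seqs n n Aset) (\<lambda>a. Wval n u lam a \<Delta>)
      \<subseteq> argmax_on (seqs n n Aset) (\<lambda>a. Wval n u lam a \<Delta>\<^sub>0)) (nhds \<Delta>\<^sub>0)"
    using assms isCont_Wval
    by (intro eventually_argmax_on_subset) (auto simp: isCont_def tendsto_at_iff_tendsto_nhds)
  then show ?thesis
    by eventually_elim (use assms(4) in \<open>auto simp: solution_is_iff_argmax\<close>)
qed

lemma solution_near_one:
  assumes "1 \<le> n" "finite (profiles n Aset)"
  shows "eventually (\<lambda>\<Delta>. solution_is n Aset u lam \<Delta>
           (\<lambda>k. argmax_on (profiles n Aset) (\<lambda>a'. \<Sum>i=1..n. lam i * u i a'))) (nhds 1)"
proof (rule eventually_solution_is)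
  show "solution_is n Aset u lam 1 (\<lambda>k. argmax_on (profiles n Aset) (\<lambda>a'. \<Sum>i=1..n. lam i * u i a'))"
    unfolding solution_is_iff_argmax
  proof (intro ballI)
    fix a k assume a: "a \<in> argmax_on (seqs n n Aset) (\<lambda>a. Wval n u lam a 1)" and k: "k \<in> {1..n}"
    then have "a \<in> argmax_on (PiE {1..n} (\<lambda>_. profiles n Aset)) (\<lambda>a. \<Sum>k=1..n. (\<Sum>i=1..n. lam i * u i (a k)) / n)"
      using assms by (simp add: Wval_at_one seqs_def)
    from argmax_on_separable_sum[OF _ this k] show "a k \<in> argmax_on (profiles n Aset) (\<lambda>a'. \<Sum>i=1..n. lam i * u i a')"
      using assms by (simp add: argmax_on_divide_pos)
  qed
qed (use assms finite_seqs in auto)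

lemma solution_near_zero:
  assumes "1 \<le> n" "finite (profiles n Aset)"
  shows "eventually (\<lambda>\<Delta>. solution_is n Aset u lam \<Delta>
           (\<lambda>k. argmax_on (profiles n Aset) (\<lambda>a'. lam k * u k a'))) (nhds 0)"
proof (rule eventually_solution_is)
  show "solution_is n Aset u lam 0 (\<lambda>k. argmax_on (profiles n Aset) (\<lambda>a'. lam k * u k a'))"
    unfolding solution_is_iff_argmax
  proof (intro ballI)
    fix a k assume a: "a \<in> argmax_on (seqs n n Aset) (\<lambda>a. Wval n u lam a 0)" and k: "k \<in> {1..n}"
    then have "a \<in> argmax_on (PiE {1..n} (\<lambda>_. profiles n Aset)) (\<lambda>a. \<Sum>k=1..n. lam k * u k (a k))"
      by (simp add: Wval_at_zero seqs_def)
    from argmax_on_separable_sum[OF _ this k] show "a k \<in> argmax_on (profiles n Aset) (\<lambda>a'. lam k * u k a')"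
      by simp
  qed
qed (use assms finite_seqs in auto)

section \<open>The payoff set F\<close>

lemma Uval_bounds:
  assumes P: "finite (profiles n Aset)" and a: "a \<in> seqs n (n * T) Aset"
    and nT: "1 \<le> n" "1 \<le> T" and \<delta>: "0 \<le> \<delta>"
  shows "Min (u i ` profiles n Aset) \<le> Uval n T \<delta> u i a \<and> Uval n T \<delta> u i a \<le> Max (u i ` profiles n Aset)"
  unfolding Uval_def
proof (rule weighted_mean_bounds)
  show "0 < (\<Sum>k=1..n * T. \<delta> ^ (k - 1))" using \<delta> nT by (intro sum_powers_pos) auto
  show "Min (u i ` profiles n Aset) \<le> u i (a (cyc (n * T) ((i - 1) * T + k))) \<and>
      u i (a (cyc (n * T) ((i - 1) * T + k))) \<le> Max (u i ` profiles n Aset)" for k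
    using P nT seqs_cyc_in_profiles[OF a] by simp
qed (use \<delta> in auto)

lemma Uval_const:
  assumes "1 \<le> n" "1 \<le> T" "0 \<le> \<delta>"
  shows "Uval n T \<delta> u i (\<lambda>s\<in>{1..n * T}. q) = u i q"
proof -
  have "(\<Sum>k=1..n * T. \<delta> ^ (k - 1) * u i ((\<lambda>s\<in>{1..n * T}. q) (cyc (n * T) ((i - 1) * T + k))))
      = (\<Sum>k=1..n * T. \<delta> ^ (k - 1)) * u i q"
    using assms cyc_in_range[of "n * T"] by (simp add: sum_distrib_right)
  moreover have "0 < (\<Sum>k=1..n * T. \<delta> ^ (k - 1))" using assms by (intro sum_powers_pos) auto
  ultimately show ?thesis unfolding Uval_def by simp
qed

lemma Uval_near_mean:
  assumes P: "finite (profiles n Aset)" and a: "a \<in> seqs n (n * T) Aset"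
    and nT: "1 \<le> n" "1 \<le> T" and \<delta>: "0 < \<delta>" "\<delta> \<le> 1"
  shows "\<bar>Uval n T \<delta> u i a - (\<Sum>s=1..n * T. u i (a s)) / real (n * T)\<bar>
           \<le> payoff_range n Aset u i * (1 - \<delta> ^ (n * T)) / \<delta> ^ (n * T)"
proof -
  define m where "m = n * T"
  have m: "0 < m" using nT unfolding m_def by simp
  let ?x = "\<lambda>k. u i (a (cyc m ((i - 1) * T + k)))"
  have "(\<Sum>s=1..m. u i (a s)) = (\<Sum>k=1..m. ?x k)"
    using sum_cyc_shift[OF m, of "\<lambda>s. u i (a s)"] by simp
  moreover have "\<bar>(\<Sum>k=1..m. \<delta> ^ (k - 1) * ?x k) / (\<Sum>k=1..m. \<delta> ^ (k - 1)) - (\<Sum>k=1..m. ?x k) / card {1..m}\<bar>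
      \<le> payoff_range n Aset u i * (1 - \<delta> ^ m) / \<delta> ^ m"
  proof (rule weighted_mean_near_mean)
    show "\<delta> ^ m \<le> \<delta> ^ (k - 1) \<and> \<delta> ^ (k - 1) \<le> 1" if "k \<in> {1..m}" for k
      using that \<delta> by (auto intro: power_decreasing power_le_one)
    show "\<bar>?x k - Min (u i ` profiles n Aset)\<bar> \<le> payoff_range n Aset u i" for k
    proof -
      have "a (cyc m ((i - 1) * T + k)) \<in> profiles n Aset"
        using seqs_cyc_in_profiles[OF a[folded m_def] m] .
      then have "Min (u i ` profiles n Aset) \<le> ?x k" "?x k \<le> Max (u i ` profiles n Aset)"
        using P by simp_all
      then show ?thesis unfolding payoff_range_def by (simp add: abs_le_iff)
    qed
  qed (use m \<delta> in auto)
  ultimately show ?thesis unfolding Uval_def m_def by simp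
qed

lemma Uval_block:
  assumes P: "finite (profiles n Aset)" and q: "\<And>j. j \<in> {1..n} \<Longrightarrow> q j \<in> profiles n Aset"
    and T: "1 \<le> T" and \<delta>: "0 \<le> \<delta>" and i: "i \<in> {1..n}"
  shows "\<bar>Uval n T \<delta> u i (\<lambda>s\<in>{1..n * T}. q ((s - 1) div T + 1)) - u i (q i)\<bar>
           \<le> \<delta> ^ T * payoff_range n Aset u i"
proof -
  define m where "m = n * T"
  define a where "a = (\<lambda>s\<in>{1..m}. q ((s - 1) div T + 1))"
  let ?w = "\<lambda>k. \<delta> ^ (k - 1)"
  let ?x = "\<lambda>k. u i (a (cyc m ((i - 1) * T + k)))"
  have m: "0 < m" "T \<le> m" using T i unfolding m_def by auto
  have S: "0 < sum ?w {1..m}" using \<delta> m by (intro sum_powers_pos) auto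
  have aP: "a s \<in> profiles n Aset" if "s \<in> {1..m}" for s
  proof -
    have "(s - 1) div T < n" using that T unfolding m_def by (intro less_mult_imp_div_less) auto
    then show ?thesis using that q unfolding a_def by simp
  qed
  \<comment> \<open>the first \<open>T\<close> periods of player \<open>i\<close>'s window form block \<open>i\<close>\<close>
  have block: "?x k = u i (q i)" if k: "k \<in> {1..T}" for k
  proof -
    have "(i - 1) * T + k \<le> i * T" using i k by (cases i) auto
    also have "\<dots> \<le> m" using i unfolding m_def by simp
    finally have le: "(i - 1) * T + k \<le> m" .
    have "(i - 1) * T + k - 1 = (i - 1) * T + (k - 1)" using k by simp
    then have "((i - 1) * T + k - 1) div T = i - 1 + (k - 1) div T"
      using T by (simp only: div_mult_self3)
    moreover have "(k - 1) div T = 0" using k by (intro div_less) auto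
    ultimately have "((i - 1) * T + k - 1) div T = i - 1" by simp
    then show ?thesis using i k le unfolding a_def by (simp add: cyc_id)
  qed
  have "\<bar>(\<Sum>k\<in>{1..m}. ?w k * ?x k) / sum ?w {1..m} - u i (q i)\<bar>
      \<le> payoff_range n Aset u i * sum ?w ({1..m} - {1..T}) / sum ?w {1..m}"
    using \<delta> S block aP[OF cyc_in_range[OF m(1)]] q[OF i]
    by (intro weighted_mean_deviation payoff_diff_le_range[OF P]) auto
  also have "{1..m} - {1..T} = {T+1..m}" by auto
  also have "payoff_range n Aset u i * sum ?w {T+1..m} / sum ?w {1..m} \<le> \<delta> ^ T * payoff_range n Aset u i"
  proof -
    have "0 \<le> payoff_range n Aset u i" using P aP[of 1] m by (intro payoff_range_nonneg) auto
    then have "payoff_range n Aset u i * sum ?w {T+1..m} \<le> payoff_range n Aset u i * (\<delta> ^ T * sum ?w {1..m})"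
      using sum_powers_tail_le[OF \<delta> m(2)] by (intro mult_left_mono) auto
    then show ?thesis using S by (simp add: divide_le_eq mult_ac)
  qed
  finally show ?thesis unfolding Uval_def a_def m_def .
qed

lemma Fset_nonempty_bounded:
  "finite (profiles n Aset) \<Longrightarrow> profiles n Aset \<noteq> {} \<Longrightarrow>
     Fset pl n Aset u \<delta> T \<noteq> {} \<and> bounded (Fset pl n Aset u \<delta> T)"
  unfolding Fset_def
  by (simp add: finite_seqs seqs_nonempty finite_imp_bounded_convex_hull convex_hull_eq_empty)

lemma Vset_nonempty_bounded:
  "finite (profiles n Aset) \<Longrightarrow> profiles n Aset \<noteq> {} \<Longrightarrow>
     Vset pl n Aset u \<noteq> {} \<and> bounded (Vset pl n Aset u)"
  unfolding Vset_def by (simp add: finite_imp_bounded_convex_hull convex_hull_eq_empty)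

lemma Vset_subset_Fset:
  assumes "1 \<le> n" "1 \<le> T" "0 \<le> \<delta>"
  shows "Vset pl n Aset u \<subseteq> Fset pl n Aset u \<delta> T"
  unfolding Vset_def Fset_def
proof (intro hull_mono image_subsetI)
  fix q assume "q \<in> profiles n Aset"
  then have "(\<lambda>s\<in>{1..n * T}. q) \<in> seqs n (n * T) Aset" unfolding seqs_def by simp
  moreover have "vec_of pl n (\<lambda>i. u i q) = vec_of pl n (\<lambda>i. Uval n T \<delta> u i (\<lambda>s\<in>{1..n * T}. q))"
    by (simp only: Uval_const[OF assms])
  ultimately show "vec_of pl n (\<lambda>i. u i q) \<in> (\<lambda>a. vec_of pl n (\<lambda>i. Uval n T \<delta> u i a)) ` seqs n (n * T) Aset"
    by blast
qed

lemma mean_payoff_in_Vset: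
  assumes a: "a \<in> seqs n m Aset" and m: "1 \<le> m"
  shows "vec_of pl n (\<lambda>i. (\<Sum>s=1..m. u i (a s)) / real m) \<in> Vset pl n Aset u"
proof -
  have "(\<Sum>s=1..m. (1 / real m) *\<^sub>R vec_of pl n (\<lambda>i. u i (a s))) \<in> Vset pl n Aset u"
    unfolding Vset_def
  proof (rule convex_sum)
    show "vec_of pl n (\<lambda>i. u i (a s)) \<in> convex hull (\<lambda>a. vec_of pl n (\<lambda>i. u i a)) ` profiles n Aset"
      if "s \<in> {1..m}" for s
      using a that unfolding seqs_def by (intro hull_inc imageI) auto
  qed (use m in auto)
  moreover have "(\<Sum>s=1..m. (1 / real m) *\<^sub>R vec_of pl n (\<lambda>i. u i (a s)))
      = vec_of pl n (\<lambda>i. (\<Sum>s=1..m. u i (a s)) / real m)"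
    by (simp add: vec_eq_iff vec_of_def sum_divide_distrib)
  ultimately show ?thesis by simp
qed

lemma hausdorff_Fset_Vset_le:
  assumes P: "finite (profiles n Aset)" "profiles n Aset \<noteq> {}"
    and pl: "bij_betw pl {1..n} (UNIV :: 'n::finite set)"
    and nT: "1 \<le> n" "1 \<le> T" and \<delta>: "0 < \<delta>" "\<delta> \<le> 1"
  shows "hausdorff_dist (Fset pl n Aset u \<delta> T) (Vset pl n Aset u)
           \<le> (\<Sum>i=1..n. payoff_range n Aset u i) * (1 - \<delta> ^ (n * T)) / \<delta> ^ (n * T)"
    (is "_ \<le> ?r")
proof (rule hausdorff_dist_le)
  have "0 \<le> (\<Sum>i=1..n. payoff_range n Aset u i)"
    using P by (intro sum_nonneg payoff_range_nonneg) auto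
  moreover have "0 < \<delta> ^ (n * T)" "\<delta> ^ (n * T) \<le> 1" using \<delta> by (auto simp: power_le_one)
  ultimately have r: "0 \<le> ?r" by simp
  show "\<exists>y\<in>Vset pl n Aset u. dist x y \<le> ?r" if "x \<in> Fset pl n Aset u \<delta> T" for x
  proof (rule convex_hull_near_convex[OF _ r _ that[unfolded Fset_def]])
    show "convex (Vset pl n Aset u)" unfolding Vset_def by simp
    fix g assume "g \<in> (\<lambda>a. vec_of pl n (\<lambda>i. Uval n T \<delta> u i a)) ` seqs n (n * T) Aset"
    then obtain a where a: "a \<in> seqs n (n * T) Aset" and g: "g = vec_of pl n (\<lambda>i. Uval n T \<delta> u i a)"
      by blast
    let ?y = "vec_of pl n (\<lambda>i. (\<Sum>s=1..n * T. u i (a s)) / real (n * T))"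
    have "dist g ?y \<le> (\<Sum>i=1..n. \<bar>Uval n T \<delta> u i a - (\<Sum>s=1..n * T. u i (a s)) / real (n * T)\<bar>)"
      unfolding g by (rule dist_vec_of_le[OF pl])
    also have "\<dots> \<le> (\<Sum>i=1..n. payoff_range n Aset u i * (1 - \<delta> ^ (n * T)) / \<delta> ^ (n * T))"
      using Uval_near_mean[OF P(1) a nT \<delta>] by (intro sum_mono) blast
    also have "\<dots> = ?r" by (simp add: sum_distrib_right sum_divide_distrib)
    finally show "\<exists>y\<in>Vset pl n Aset u. dist g y \<le> ?r"
      using mean_payoff_in_Vset[OF a] nT by auto
  qed
  show "\<exists>x\<in>Fset pl n Aset u \<delta> T. dist y x \<le> ?r" if "y \<in> Vset pl n Aset u" for y
    using that Vset_subset_Fset[OF nT, of \<delta> pl Aset u] \<delta> r by (intro bexI[of _ y]) auto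
qed (use Fset_nonempty_bounded[OF P, of pl u \<delta> T] Vset_nonempty_bounded[OF P, of pl u] in auto)

lemma Fset_subset_Boxset:
  assumes P: "finite (profiles n Aset)" and pl: "bij_betw pl {1..n} (UNIV :: 'n::finite set)"
    and nT: "1 \<le> n" "1 \<le> T" and \<delta>: "0 \<le> \<delta>"
  shows "Fset pl n Aset u \<delta> T \<subseteq> Boxset pl n Aset u"
  unfolding Fset_def Boxset_def
proof (intro hull_minimal image_subsetI convex_box)
  fix a assume a: "a \<in> seqs n (n * T) Aset"
  show "vec_of pl n (\<lambda>i. Uval n T \<delta> u i a)
      \<in> cbox (vec_of pl n (\<lambda>i. Min (u i ` profiles n Aset))) (vec_of pl n (\<lambda>i. Max (u i ` profiles n Aset)))"
    unfolding mem_box_cart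
  proof
    fix j
    obtain i where "i \<in> {1..n}" "j = pl i" using pl unfolding bij_betw_def by blast
    then show "vec_of pl n (\<lambda>i. Min (u i ` profiles n Aset)) $ j \<le> vec_of pl n (\<lambda>i. Uval n T \<delta> u i a) $ j \<and>
        vec_of pl n (\<lambda>i. Uval n T \<delta> u i a) $ j \<le> vec_of pl n (\<lambda>i. Max (u i ` profiles n Aset)) $ j"
      using Uval_bounds[OF P a nT \<delta>, of u i] pl by (simp add: vec_of_nth_pl)
  qed
qed

lemma Boxset_vertex_near_Fset:
  assumes P: "finite (profiles n Aset)" "profiles n Aset \<noteq> {}"
    and pl: "bij_betw pl {1..n} (UNIV :: 'n::finite set)"
    and nT: "1 \<le> n" "1 \<le> T" and \<delta>: "0 \<le> \<delta>"
    and x: "\<And>i. i \<in> {1..n} \<Longrightarrow> x $ pl i \<in> {Min (u i ` profiles n Aset), Max (u i ` profiles n Aset)}"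
  shows "\<exists>y\<in>Fset pl n Aset u \<delta> T. dist x y \<le> \<delta> ^ T * (\<Sum>i=1..n. payoff_range n Aset u i)"
proof -
  have "\<exists>p\<in>profiles n Aset. u i p = x $ pl i" if i: "i \<in> {1..n}" for i
  proof -
    have "Min (u i ` profiles n Aset) \<in> u i ` profiles n Aset"
      "Max (u i ` profiles n Aset) \<in> u i ` profiles n Aset"
      using P by (simp_all add: Min_in Max_in)
    then have "x $ pl i \<in> u i ` profiles n Aset" using x[OF i] by auto
    then show ?thesis by (auto simp: image_iff)
  qed
  then obtain q where q: "\<And>i. i \<in> {1..n} \<Longrightarrow> q i \<in> profiles n Aset \<and> u i (q i) = x $ pl i"
    by metis
  \<comment> \<open>block \<open>i\<close> of the sequence repeats \<open>q i\<close>, which dominates player \<open>i\<close>'s payoff\<close>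
  define a where "a = (\<lambda>s\<in>{1..n * T}. q ((s - 1) div T + 1))"
  have "a \<in> seqs n (n * T) Aset"
  proof -
    have "(s - 1) div T < n" if "s \<in> {1..n * T}" for s
      using that nT by (intro less_mult_imp_div_less) auto
    then show ?thesis unfolding a_def seqs_def using q by (auto simp: Suc_le_eq)
  qed
  then have "vec_of pl n (\<lambda>i. Uval n T \<delta> u i a) \<in> Fset pl n Aset u \<delta> T"
    unfolding Fset_def by (intro hull_inc imageI)
  moreover have "dist x (vec_of pl n (\<lambda>i. Uval n T \<delta> u i a)) \<le> (\<Sum>i=1..n. \<bar>x $ pl i - Uval n T \<delta> u i a\<bar>)"
    using dist_vec_of_le[OF pl, of "\<lambda>i. x $ pl i"] vec_of_components[OF pl] by simp
  moreover have "\<dots> \<le> (\<Sum>i=1..n. \<delta> ^ T * payoff_range n Aset u i)"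
  proof (rule sum_mono)
    fix i assume i: "i \<in> {1..n}"
    have "\<bar>Uval n T \<delta> u i a - u i (q i)\<bar> \<le> \<delta> ^ T * payoff_range n Aset u i"
      unfolding a_def using q \<delta> nT i by (intro Uval_block[OF P(1)]) auto
    then show "\<bar>x $ pl i - Uval n T \<delta> u i a\<bar> \<le> \<delta> ^ T * payoff_range n Aset u i"
      using q[OF i] by (simp add: abs_minus_commute)
  qed
  ultimately show ?thesis by (force simp: sum_distrib_left)
qed

lemma hausdorff_Fset_Boxset_le:
  assumes P: "finite (profiles n Aset)" "profiles n Aset \<noteq> {}"
    and pl: "bij_betw pl {1..n} (UNIV :: 'n::finite set)"
    and nT: "1 \<le> n" "1 \<le> T" and \<delta>: "0 < \<delta>" "\<delta> \<le> 1"
  shows "hausdorff_dist (Fset pl n Aset u \<delta> T) (Boxset pl n Aset u)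
           \<le> \<delta> ^ T * (\<Sum>i=1..n. payoff_range n Aset u i)"
    (is "_ \<le> ?r")
proof (rule hausdorff_dist_le)
  let ?lo = "vec_of pl n (\<lambda>i. Min (u i ` profiles n Aset))"
  let ?hi = "vec_of pl n (\<lambda>i. Max (u i ` profiles n Aset))"
  have r: "0 \<le> ?r" using P \<delta> by (intro mult_nonneg_nonneg sum_nonneg payoff_range_nonneg) auto
  have FB: "Fset pl n Aset u \<delta> T \<subseteq> Boxset pl n Aset u"
    using Fset_subset_Boxset[OF P(1) pl nT] \<delta> by simp
  then show "\<exists>y\<in>Boxset pl n Aset u. dist x y \<le> ?r" if "x \<in> Fset pl n Aset u \<delta> T" for x
    using that r by (intro bexI[of _ x]) auto
  have near_vertex: "\<exists>y\<in>Fset pl n Aset u \<delta> T. dist x y \<le> ?r"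
    if x: "x \<in> {x. \<forall>b\<in>Basis. x \<bullet> b = ?lo \<bullet> b \<or> x \<bullet> b = ?hi \<bullet> b}" for x
  proof (rule Boxset_vertex_near_Fset[OF P pl nT])
    show "x $ pl i \<in> {Min (u i ` profiles n Aset), Max (u i ` profiles n Aset)}" if "i \<in> {1..n}" for i
      using x[simplified, rule_format, of "axis (pl i) 1"] pl that
      by (simp add: cart_eq_inner_axis[symmetric] vec_of_nth_pl)
  qed (use \<delta> in simp)
  show "\<exists>x\<in>Fset pl n Aset u \<delta> T. dist y x \<le> ?r" if "y \<in> Boxset pl n Aset u" for y
  proof (rule convex_hull_near_convex[OF _ r near_vertex])
    show "convex (Fset pl n Aset u \<delta> T)" unfolding Fset_def by simp
    show "y \<in> convex hull {x. \<forall>b\<in>Basis. x \<bullet> b = ?lo \<bullet> b \<or> x \<bullet> b = ?hi \<bullet> b}"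
      using that cbox_subset_convex_hull_vertices[of ?lo ?hi] unfolding Boxset_def by blast
  qed
  show "Boxset pl n Aset u \<noteq> {}" "bounded (Boxset pl n Aset u)"
    using FB Fset_nonempty_bounded[OF P, of pl u \<delta> T] unfolding Boxset_def by auto
qed (use Fset_nonempty_bounded[OF P, of pl u \<delta> T] in auto)

section \<open>The limits \<delta> ^ T \<longrightarrow> 1 and \<delta> ^ T \<longrightarrow> 0\<close>

lemma eventually_nhds_one_power:
  assumes "eventually P (nhds (1::real))"
    and "\<And>\<delta> T. 0 < \<delta> \<Longrightarrow> \<delta> \<le> 1 \<Longrightarrow> 1 \<le> T \<Longrightarrow> P (\<delta> ^ T) \<Longrightarrow> Q \<delta> T"
  shows "\<exists>\<epsilon>>0. \<forall>(\<delta>::real) (T::nat). 0 < \<delta> \<and> \<delta> \<le> 1 \<and> T \<ge> 1 \<and> 1 - \<epsilon> < \<delta> ^ T \<longrightarrow> Q \<delta> T"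
proof -
  obtain \<epsilon> where "\<epsilon> > 0" and \<epsilon>: "\<And>D. dist D 1 < \<epsilon> \<Longrightarrow> P D"
    using assms(1) unfolding eventually_nhds_metric by blast
  have "Q \<delta> T" if "0 < \<delta>" "\<delta> \<le> 1" "1 \<le> T" "1 - \<epsilon> < \<delta> ^ T" for \<delta> T
    using that \<epsilon>[of "\<delta> ^ T"] assms(2) power_le_one[of \<delta> T] by (simp add: dist_real_def)
  then show ?thesis using \<open>\<epsilon> > 0\<close> by blast
qed

lemma eventually_nhds_zero_power:
  assumes "eventually P (nhds (0::real))"
    and "\<And>\<delta> T. 0 < \<delta> \<Longrightarrow> \<delta> \<le> 1 \<Longrightarrow> 1 \<le> T \<Longrightarrow> P (\<delta> ^ T) \<Longrightarrow> Q \<delta> T"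
  shows "\<exists>\<epsilon>>0. \<forall>(\<delta>::real) (T::nat). 0 < \<delta> \<and> \<delta> \<le> 1 \<and> T \<ge> 1 \<and> \<delta> ^ T < \<epsilon> \<longrightarrow> Q \<delta> T"
proof -
  obtain \<epsilon> where "\<epsilon> > 0" and \<epsilon>: "\<And>D. dist D 0 < \<epsilon> \<Longrightarrow> P D"
    using assms(1) unfolding eventually_nhds_metric by blast
  have "Q \<delta> T" if "0 < \<delta>" "\<delta> \<le> 1" "1 \<le> T" "\<delta> ^ T < \<epsilon>" for \<delta> T
    using that \<epsilon>[of "\<delta> ^ T"] assms(2) by simp
  then show ?thesis using \<open>\<epsilon> > 0\<close> by blast
qed

lemma Fset_converges_to_Vset:
  assumes P: "finite (profiles n Aset)" "profiles n Aset \<noteq> {}"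
    and pl: "bij_betw pl {1..n} (UNIV :: 'n::finite set)" and n: "1 \<le> n"
  shows "\<forall>\<epsilon>>0. \<exists>\<eta>>0. \<forall>(\<delta>::real) (T::nat). 0 < \<delta> \<and> \<delta> \<le> 1 \<and> T \<ge> 1 \<and> 1 - \<eta> < \<delta> ^ T \<longrightarrow>
           hausdorff_dist (Fset pl n Aset u \<delta> T) (Vset pl n Aset u) < \<epsilon>"
proof (intro allI impI)
  fix \<epsilon> :: real assume "\<epsilon> > 0"
  define B where "B = (\<Sum>i=1..n. payoff_range n Aset u i)"
  have "isCont (\<lambda>D. B * (1 - D ^ n) / D ^ n) 1" by (intro continuous_intros) simp
  then have "((\<lambda>D. B * (1 - D ^ n) / D ^ n) \<longlongrightarrow> 0) (nhds 1)"
    using tendsto_at_iff_tendsto_nhds[of "\<lambda>D. B * (1 - D ^ n) / D ^ n" 1] by (simp add: isCont_def)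
  then have "eventually (\<lambda>D. B * (1 - D ^ n) / D ^ n < \<epsilon>) (nhds 1)"
    using \<open>\<epsilon> > 0\<close> by (rule order_tendstoD(2))
  then show "\<exists>\<eta>>0. \<forall>\<delta> T. 0 < \<delta> \<and> \<delta> \<le> 1 \<and> T \<ge> 1 \<and> 1 - \<eta> < \<delta> ^ T \<longrightarrow>
      hausdorff_dist (Fset pl n Aset u \<delta> T) (Vset pl n Aset u) < \<epsilon>"
  proof (rule eventually_nhds_one_power)
    fix \<delta> :: real and T :: nat
    assume \<delta>T: "0 < \<delta>" "\<delta> \<le> 1" "1 \<le> T" and "B * (1 - (\<delta> ^ T) ^ n) / (\<delta> ^ T) ^ n < \<epsilon>"
    moreover have "(\<delta> ^ T) ^ n = \<delta> ^ (n * T)" by (simp add: mult.commute power_mult)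
    ultimately show "hausdorff_dist (Fset pl n Aset u \<delta> T) (Vset pl n Aset u) < \<epsilon>"
      using hausdorff_Fset_Vset_le[OF P pl n \<delta>T(3,1,2), of u] unfolding B_def by simp
  qed
qed

lemma Fset_converges_to_Boxset:
  assumes P: "finite (profiles n Aset)" "profiles n Aset \<noteq> {}"
    and pl: "bij_betw pl {1..n} (UNIV :: 'n::finite set)" and n: "1 \<le> n"
  shows "\<forall>\<epsilon>>0. \<exists>\<eta>>0. \<forall>(\<delta>::real) (T::nat). 0 < \<delta> \<and> \<delta> \<le> 1 \<and> T \<ge> 1 \<and> \<delta> ^ T < \<eta> \<longrightarrow>
           hausdorff_dist (Fset pl n Aset u \<delta> T) (Boxset pl n Aset u) < \<epsilon>"
proof (intro allI impI)
  fix \<epsilon> :: real assume "\<epsilon> > 0"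
  define B where "B = (\<Sum>i=1..n. payoff_range n Aset u i)"
  have "isCont (\<lambda>D. D * B) 0" by (intro continuous_intros)
  then have "((\<lambda>D. D * B) \<longlongrightarrow> 0) (nhds 0)"
    using tendsto_at_iff_tendsto_nhds[of "\<lambda>D. D * B" 0] by (simp add: isCont_def)
  then have "eventually (\<lambda>D. D * B < \<epsilon>) (nhds 0)"
    using \<open>\<epsilon> > 0\<close> by (rule order_tendstoD(2))
  then show "\<exists>\<eta>>0. \<forall>\<delta> T. 0 < \<delta> \<and> \<delta> \<le> 1 \<and> T \<ge> 1 \<and> \<delta> ^ T < \<eta> \<longrightarrow>
      hausdorff_dist (Fset pl n Aset u \<delta> T) (Boxset pl n Aset u) < \<epsilon>"
  proof (rule eventually_nhds_zero_power)
    fix \<delta> :: real and T :: nat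
    assume \<delta>T: "0 < \<delta>" "\<delta> \<le> 1" "1 \<le> T" and "\<delta> ^ T * B < \<epsilon>"
    then show "hausdorff_dist (Fset pl n Aset u \<delta> T) (Boxset pl n Aset u) < \<epsilon>"
      using hausdorff_Fset_Boxset_le[OF P pl n \<delta>T(3,1,2), of u] unfolding B_def by simp
  qed
qed

theorem corollary1:
  fixes n :: nat and Aset :: "nat \<Rightarrow> 'b set" and u :: "nat \<Rightarrow> (nat \<Rightarrow> 'b) \<Rightarrow> real"
    and lam :: "nat \<Rightarrow> real" and pl :: "nat \<Rightarrow> 'n::finite"
  assumes n2: "n \<ge> 2"
    and fin: "\<forall>i\<in>{1..n}. finite (Aset i) \<and> Aset i \<noteq> {}"
    and lam_nz: "\<exists>i\<in>{1..n}. lam i \<noteq> 0"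
    and pl: "bij_betw pl {1..n} (UNIV :: 'n set)"
  shows
    "(\<exists>\<epsilon>>0. \<forall>(\<delta>::real) (T::nat). 0 < \<delta> \<and> \<delta> \<le> 1 \<and> T \<ge> 1 \<and> 1 - \<epsilon> < \<delta> ^ T \<longrightarrow>
        solution_is n Aset u lam (\<delta> ^ T)
          (\<lambda>k. argmax_on (profiles n Aset) (\<lambda>a'. \<Sum>i=1..n. lam i * u i a')))
   \<and> (\<forall>\<epsilon>>0. \<exists>\<eta>>0. \<forall>(\<delta>::real) (T::nat). 0 < \<delta> \<and> \<delta> \<le> 1 \<and> T \<ge> 1 \<and> 1 - \<eta> < \<delta> ^ T \<longrightarrow>
        hausdorff_dist (Fset pl n Aset u \<delta> T) (Vset pl n Aset u) < \<epsilon>)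
   \<and> (\<exists>\<epsilon>>0. \<forall>(\<delta>::real) (T::nat). 0 < \<delta> \<and> \<delta> \<le> 1 \<and> T \<ge> 1 \<and> \<delta> ^ T < \<epsilon> \<longrightarrow>
        solution_is n Aset u lam (\<delta> ^ T)
          (\<lambda>k. argmax_on (profiles n Aset) (\<lambda>a'. lam k * u k a')))
   \<and> (\<forall>\<epsilon>>0. \<exists>\<eta>>0. \<forall>(\<delta>::real) (T::nat). 0 < \<delta> \<and> \<delta> \<le> 1 \<and> T \<ge> 1 \<and> \<delta> ^ T < \<eta> \<longrightarrow>
        hausdorff_dist (Fset pl n Aset u \<delta> T) (Boxset pl n Aset u) < \<epsilon>)"
proof -
  have n: "1 \<le> n" using n2 by simp
  have P: "finite (profiles n Aset)" "profiles n Aset \<noteq> {}"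
    using fin finite_profiles[of n Aset] profiles_nonempty[of n Aset] by auto
  show ?thesis
    using Fset_converges_to_Vset[OF P pl n] Fset_converges_to_Boxset[OF P pl n]
    by (intro conjI eventually_nhds_one_power[OF solution_near_one[OF n P(1)]]
        eventually_nhds_zero_power[OF solution_near_zero[OF n P(1)]]) auto
qed

end
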